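(* Let $\nu\ge0$ and define, for $x>0$, $$\Gamma_{\nu+1}(x)=\frac{x}{\sqrt{x^2+\left(\nu+\frac52\right)^2}+\nu+\frac32}.$$ Let $x_\nu$ be the unique positive root of the equation $$\Gamma_{\nu+1}^{2\nu+1}(x)\left(\frac{2(\nu+1)}{x}+\Gamma_{\nu+1}(x)\right)^{2\nu+3}=1.$$ Then for all $x\in(0,x_\nu)$, $$I_{\nu+1}^{4\nu+4}(x)<I_{\nu+2}^{2\nu+1}(x)\,I_\nu^{2\nu+3}(x).$$
   Context: $I_\nu$ denotes the modified Bessel function of the first kind of order $\nu$. *)

theory Defs
  imports "HOL-Analysis.Analysis"
begin

definition besselI :: "real \<Rightarrow> real \<Rightarrow> real" where
  "besselI nu x = (\<Sum>k. (x / 2) powr (2 * real k + nu) / (fact k * Gamma (real k + nu + 1)))"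

text \<open>GammaB nu x is the paper's Gamma_{nu+1}(x).\<close>
definition GammaB :: "real \<Rightarrow> real \<Rightarrow> real" where
  "GammaB nu x = x / (sqrt (x\<^sup>2 + (nu + 5/2)\<^sup>2) + nu + 3/2)"

definition root_eq :: "real \<Rightarrow> real \<Rightarrow> bool" where
  "root_eq nu x \<longleftrightarrow>
     (GammaB nu x) powr (2 * nu + 1) * (2 * (nu + 1) / x + GammaB nu x) powr (2 * nu + 3) = 1"

end

theory Submission
  imports Defs
begin

text \<open>
  Write I_mu(x) = (x/2)^mu S_mu(x^2/4) with an entire power series S_mu satisfying
  S_mu' = S_(mu+1). The ratio r = I_(nu+2) / I_(nu+1) then solves the Riccati equation
  r' = 1 - (2 nu + 3) r / x - r^2, while Gamma_(nu+1) is a strict subsolution of it.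
  Hence r - Gamma_(nu+1) increases wherever it is non-positive; as it is bounded below
  by -x near 0, it never becomes negative, which is Amos' bound Gamma_(nu+1) <= r.
  The recurrence I_nu = (2 (nu + 1) / x) I_(nu+1) + I_(nu+2) turns the claim into
  r^(2 nu + 1) (2 (nu + 1) / x + r)^(2 nu + 3) > 1, so by monotonicity it suffices that
  the left-hand side of the root equation exceeds 1 on (0, x_nu): it tends to infinity
  at 0 and takes the value 1 only at x_nu.
\<close>

definition bessel_coeff :: "real \<Rightarrow> nat \<Rightarrow> real" where
  "bessel_coeff mu k = 1 / (fact k * Gamma (real k + mu + 1))"

definition bessel_series :: "real \<Rightarrow> real \<Rightarrow> real" where
  "bessel_series mu y = (\<Sum>k. bessel_coeff mu k * y ^ k)"

lemma pochhammer_ge_1: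
  fixes z :: real
  assumes "z \<ge> 1"
  shows "pochhammer z k \<ge> 1"
proof (induction k)
  case (Suc k)
  then show ?case
    using assms mult_mono[of 1 "pochhammer z k" 1 "z + real k"] by (simp add: pochhammer_Suc)
qed simp

lemma pos_not_nonpos_Ints: "(x::real) > 0 \<Longrightarrow> x \<notin> \<int>\<^sub>\<le>\<^sub>0"
  by (auto dest: nonpos_Ints_nonpos)

lemma Gamma_le_Gamma_plus_nat:
  assumes "mu \<ge> 0"
  shows "Gamma (mu + 1) \<le> Gamma (real k + mu + 1)"
proof -
  have "pochhammer (mu + 1) k = Gamma (real k + mu + 1) / Gamma (mu + 1)"
    using pochhammer_Gamma[OF pos_not_nonpos_Ints, of "mu + 1" k] assms by (simp add: add_ac)
  moreover have "pochhammer (mu + 1) k \<ge> 1"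
    using assms by (intro pochhammer_ge_1) simp
  ultimately show ?thesis
    using assms by (simp add: le_divide_eq)
qed

lemma bessel_coeff_pos: "mu \<ge> 0 \<Longrightarrow> bessel_coeff mu k > 0"
  unfolding bessel_coeff_def by simp

lemma summable_bessel_series:
  assumes "mu \<ge> 0"
  shows "summable (\<lambda>k. bessel_coeff mu k * y ^ k)"
proof (rule summable_comparison_test')
  show "summable (\<lambda>k. inverse (fact k) * \<bar>y\<bar> ^ k / Gamma (mu + 1))"
    using summable_exp[of "\<bar>y\<bar>"] by (rule summable_divide)
next
  fix k
  have "Gamma (mu + 1) > 0"
    using assms by simp
  then have "bessel_coeff mu k \<le> inverse (fact k) / Gamma (mu + 1)"
    using Gamma_le_Gamma_plus_nat[OF assms, of k]
    by (simp add: bessel_coeff_def divide_simps)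
  then have "bessel_coeff mu k * \<bar>y\<bar> ^ k \<le> inverse (fact k) / Gamma (mu + 1) * \<bar>y\<bar> ^ k"
    by (rule mult_right_mono) simp
  then show "norm (bessel_coeff mu k * y ^ k) \<le> inverse (fact k) * \<bar>y\<bar> ^ k / Gamma (mu + 1)"
    using bessel_coeff_pos[OF assms, of k] by (simp add: abs_mult power_abs)
qed

lemma bessel_coeff_recurrence:
  assumes "mu \<ge> 0"
  shows "bessel_coeff mu k = (real k + mu + 1) * bessel_coeff (mu + 1) k"
proof -
  have "Gamma (real k + mu + 1 + 1) = (real k + mu + 1) * Gamma (real k + mu + 1)"
    using assms by (intro Gamma_plus1 pos_not_nonpos_Ints) simp
  then show ?thesis
    using assms by (simp add: bessel_coeff_def add_ac)
qed

lemma diffs_bessel_coeff: "mu \<ge> 0 \<Longrightarrow> diffs (bessel_coeff mu) = bessel_coeff (mu + 1)"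
proof
  fix n
  assume "mu \<ge> 0"
  have "Gamma (real (Suc n) + mu + 1) = Gamma (real n + (mu + 1) + 1)"
    by (simp add: add_ac)
  then show "diffs (bessel_coeff mu) n = bessel_coeff (mu + 1) n"
    unfolding diffs_def bessel_coeff_def by (simp del: of_nat_Suc add: fact_Suc)
qed

lemma bessel_series_has_derivative:
  assumes "mu \<ge> 0"
  shows "(bessel_series mu has_real_derivative bessel_series (mu + 1) y) (at y)"
  using termdiffs_strong_converges_everywhere[OF summable_bessel_series[OF assms]]
  unfolding bessel_series_def[abs_def] diffs_bessel_coeff[OF assms] .

lemma bessel_series_pos:
  assumes "mu \<ge> 0" "y \<ge> 0"
  shows "bessel_series mu y > 0"
  unfolding bessel_series_def
proof (rule suminf_pos2[where i = 0])
  show "summable (\<lambda>k. bessel_coeff mu k * y ^ k)"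
    using assms(1) by (rule summable_bessel_series)
  show "0 \<le> bessel_coeff mu k * y ^ k" for k
    using bessel_coeff_pos[OF assms(1), of k] assms(2) by simp
  show "0 < bessel_coeff mu 0 * y ^ 0"
    using bessel_coeff_pos[OF assms(1), of 0] by simp
qed

lemma bessel_series_recurrence:
  assumes "mu \<ge> 0"
  shows "bessel_series mu y = y * bessel_series (mu + 2) y + (mu + 1) * bessel_series (mu + 1) y"
proof -
  have mu1: "mu + 1 \<ge> 0"
    using assms by simp
  define f where "f k = real k * bessel_coeff (mu + 1) k * y ^ k" for k
  have f_Suc: "f (Suc k) = y * (bessel_coeff (mu + 2) k * y ^ k)" for k
    using fun_cong[OF diffs_bessel_coeff[OF mu1], of k]
    by (simp add: f_def diffs_def algebra_simps del: of_nat_Suc)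
  have "summable (\<lambda>k. bessel_coeff (mu + 2) k * y ^ k)"
    using assms by (intro summable_bessel_series) simp
  then have "(\<lambda>k. f (Suc k)) sums (y * bessel_series (mu + 2) y)"
    unfolding f_Suc bessel_series_def by (intro sums_mult summable_sums)
  moreover have "f 0 = 0"
    by (simp add: f_def)
  ultimately have f_sums: "f sums (y * bessel_series (mu + 2) y)"
    by (simp add: sums_Suc_iff)
  have "(\<lambda>k. (mu + 1) * (bessel_coeff (mu + 1) k * y ^ k))
          sums ((mu + 1) * bessel_series (mu + 1) y)"
    unfolding bessel_series_def by (intro sums_mult summable_sums summable_bessel_series mu1)
  from sums_add[OF this f_sums] have
    "(\<lambda>k. bessel_coeff mu k * y ^ k)
       sums ((mu + 1) * bessel_series (mu + 1) y + y * bessel_series (mu + 2) y)"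
    by (simp add: f_def bessel_coeff_recurrence[OF assms] algebra_simps)
  then show ?thesis
    unfolding bessel_series_def by (simp add: sums_iff)
qed

lemma besselI_eq_bessel_series:
  assumes "x > 0" "mu \<ge> 0"
  shows "besselI mu x = (x / 2) powr mu * bessel_series mu (x\<^sup>2 / 4)"
proof -
  have "(x / 2) powr (2 * real k + mu) / (fact k * Gamma (real k + mu + 1))
        = (x / 2) powr mu * (bessel_coeff mu k * (x\<^sup>2 / 4) ^ k)" for k
  proof -
    have "(x / 2) powr (2 * real k + mu) = (x / 2) ^ (2 * k) * (x / 2) powr mu"
      using assms(1) by (simp add: powr_add powr_realpow[symmetric])
    also have "(x / 2) ^ (2 * k) = (x\<^sup>2 / 4) ^ k"
      by (simp add: power_mult power_divide)
    finally show ?thesis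
      by (simp add: bessel_coeff_def)
  qed
  then show ?thesis
    unfolding besselI_def bessel_series_def
    using suminf_mult[OF summable_bessel_series[OF assms(2)]] by simp
qed

lemma besselI_pos: "x > 0 \<Longrightarrow> mu \<ge> 0 \<Longrightarrow> besselI mu x > 0"
  by (simp add: besselI_eq_bessel_series bessel_series_pos)

lemma besselI_recurrence:
  assumes "x > 0" "mu \<ge> 0"
  shows "besselI mu x = 2 * (mu + 1) / x * besselI (mu + 1) x + besselI (mu + 2) x"
proof -
  define h where "h = x / 2"
  have h: "h > 0" "x = 2 * h"
    using assms(1) by (simp_all add: h_def)
  have "x\<^sup>2 / 4 = h * h"
    by (simp add: h power2_eq_square)
  moreover have "h powr (mu + 1) = h powr mu * h" "h powr (mu + 2) = h powr mu * (h * h)"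
    using h(1) by (simp_all add: powr_add power2_eq_square)
  ultimately show ?thesis
    using assms h bessel_series_recurrence[OF assms(2), of "h * h"]
    by (simp add: besselI_eq_bessel_series h_def[symmetric] field_simps)
qed

text \<open>The ratio I_(mu+1) / I_mu with the powers of x/2 cancelled, so that it can be
  differentiated through the series (see bessel_ratio_eq).\<close>

definition bessel_ratio :: "real \<Rightarrow> real \<Rightarrow> real" where
  "bessel_ratio mu x = (x / 2) * bessel_series (mu + 1) (x\<^sup>2 / 4) / bessel_series mu (x\<^sup>2 / 4)"

lemma bessel_ratio_eq:
  assumes "x > 0" "mu \<ge> 0"
  shows "bessel_ratio mu x = besselI (mu + 1) x / besselI mu x"
  using assms bessel_series_pos[OF assms(2), of "x\<^sup>2 / 4"]
  by (simp add: bessel_ratio_def besselI_eq_bessel_series powr_add)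

lemma bessel_ratio_pos: "x > 0 \<Longrightarrow> mu \<ge> 0 \<Longrightarrow> bessel_ratio mu x > 0"
  by (simp add: bessel_ratio_def bessel_series_pos)

lemma bessel_ratio_riccati:
  assumes "mu \<ge> 0" "z > 0"
  shows "(bessel_ratio mu has_real_derivative
           1 - (2 * mu + 1) * bessel_ratio mu z / z - (bessel_ratio mu z)\<^sup>2) (at z)"
proof -
  define y where "y = z\<^sup>2 / 4"
  define A where "A = bessel_series mu y"
  define B where "B = bessel_series (mu + 1) y"
  define C where "C = bessel_series (mu + 2) y"
  have "A > 0"
    using assms by (simp add: A_def y_def bessel_series_pos)
  have "A = y * C + (mu + 1) * B"
    using bessel_series_recurrence[OF assms(1)] by (simp add: A_def B_def C_def)
  then have C_eq: "C = (A - (mu + 1) * B) / y"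
    using assms(2) by (simp add: y_def)
  have chain: "((\<lambda>z. bessel_series m (z\<^sup>2 / 4)) has_real_derivative
                 bessel_series (m + 1) (z\<^sup>2 / 4) * (z / 2)) (at z)" if "m \<ge> 0" for m
    by (rule DERIV_chain2[OF bessel_series_has_derivative[OF that]])
       (auto intro!: derivative_eq_intros)
  have "(bessel_ratio mu has_real_derivative
           ((1 / 2 * B + z / 2 * (C * (z / 2))) * A - z / 2 * B * (B * (z / 2))) / A\<^sup>2) (at z)"
    unfolding bessel_ratio_def[abs_def]
    using \<open>A > 0\<close> assms(1) chain[of mu] chain[of "mu + 1"]
    by (auto intro!: derivative_eq_intros simp: A_def B_def C_def y_def add_ac power2_eq_square)
      (simp add: field_simps)
  moreover have "bessel_ratio mu z = z / 2 * B / A"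
    by (simp add: bessel_ratio_def A_def B_def y_def)
  moreover have "((1 / 2 * B + z / 2 * (C * (z / 2))) * A - z / 2 * B * (B * (z / 2))) / A\<^sup>2
      = 1 - (2 * mu + 1) * (z / 2 * B / A) / z - (z / 2 * B / A)\<^sup>2"
    using \<open>A > 0\<close> assms(2) unfolding C_eq y_def
    by (simp add: field_simps power2_eq_square)
  ultimately show ?thesis
    by simp
qed

lemma continuous_on_bessel_ratio: "mu \<ge> 0 \<Longrightarrow> continuous_on {0<..} (bessel_ratio mu)"
  by (intro continuous_at_imp_continuous_on ballI DERIV_isCont[OF bessel_ratio_riccati]) auto

lemma GammaB_denominator_ge_1:
  assumes "nu \<ge> 0"
  shows "sqrt (x\<^sup>2 + (nu + 5/2)\<^sup>2) + nu + 3/2 \<ge> 1"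
proof -
  have "sqrt (x\<^sup>2 + (nu + 5/2)\<^sup>2) \<ge> 0"
    by simp
  then show ?thesis
    using assms by linarith
qed

lemma GammaB_pos: "nu \<ge> 0 \<Longrightarrow> z > 0 \<Longrightarrow> GammaB nu z > 0"
  unfolding GammaB_def using GammaB_denominator_ge_1[of nu z] by simp

lemma GammaB_le_self: "nu \<ge> 0 \<Longrightarrow> z > 0 \<Longrightarrow> GammaB nu z \<le> z"
  unfolding GammaB_def using GammaB_denominator_ge_1[of nu z] by (simp add: divide_le_eq)

lemma GammaB_lower_bound:
  assumes "nu \<ge> 0" "0 < x" "x \<le> 1"
  shows "x / (2 * nu + 5) \<le> GammaB nu x"
proof -
  have "sqrt (x\<^sup>2 + (nu + 5/2)\<^sup>2) \<le> x + (nu + 5/2)"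
    using assms by (intro real_le_lsqrt) (auto simp: power2_eq_square algebra_simps)
  then show ?thesis
    unfolding GammaB_def using assms GammaB_denominator_ge_1[OF assms(1), of x]
    by (intro divide_left_mono) auto
qed

lemma continuous_on_GammaB: "nu \<ge> 0 \<Longrightarrow> continuous_on A (GammaB nu)"
  unfolding GammaB_def
  by (intro continuous_intros) (metis GammaB_denominator_ge_1 not_one_le_zero)

lemma GammaB_riccati_subsolution:
  assumes "nu \<ge> 0" "z > 0"
  obtains G' where "(GammaB nu has_real_derivative G') (at z)"
    and "G' < 1 - (2 * nu + 3) * GammaB nu z / z - (GammaB nu z)\<^sup>2"
proof
  define a b where "a = nu + 5/2" and "b = nu + 3/2"
  define S where "S = sqrt (z\<^sup>2 + a\<^sup>2)"
  define T where "T = S + b"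
  have "a > 0" "b > 0"
    using assms(1) by (simp_all add: a_def b_def)
  have "S > a"
    unfolding S_def using assms(2) \<open>a > 0\<close> by (intro real_less_rsqrt) simp
  then have "T > 0"
    using \<open>a > 0\<close> \<open>b > 0\<close> by (simp add: T_def)
  have S_sq: "S\<^sup>2 = z\<^sup>2 + a\<^sup>2"
    by (simp add: S_def)
  have G: "GammaB nu = (\<lambda>z. z / (sqrt (z\<^sup>2 + a\<^sup>2) + b))"
    by (simp add: GammaB_def[abs_def] a_def b_def add.assoc)
  show "(GammaB nu has_real_derivative (T - z * (z / S)) / T\<^sup>2) (at z)"
    unfolding G T_def S_def using \<open>S > a\<close> \<open>a > 0\<close> \<open>b > 0\<close>
    by (auto intro!: derivative_eq_intros simp: power2_eq_square)
      (auto simp: S_def power2_eq_square not_sum_squares_lt_zero divide_inverse)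
  txt \<open>Both sides are rational in S, and since a = b + 1 the comparison reduces to S > a.\<close>
  have "(T - z * (z / S)) / T\<^sup>2 = (a\<^sup>2 + b * S) / S / T\<^sup>2"
    using \<open>S > a\<close> \<open>a > 0\<close> S_sq by (simp add: T_def field_simps power2_eq_square)
  also have "\<dots> < (a + b) / T\<^sup>2"
  proof (rule divide_strict_right_mono)
    have "a * a < a * S"
      using \<open>S > a\<close> \<open>a > 0\<close> by simp
    then show "(a\<^sup>2 + b * S) / S < a + b"
      using \<open>S > a\<close> \<open>a > 0\<close> by (simp add: divide_less_eq power2_eq_square algebra_simps)
    show "T\<^sup>2 > 0"
      using \<open>T > 0\<close> by simp
  qed
  also have "\<dots> = (T\<^sup>2 - 2 * b * T - z\<^sup>2) / T\<^sup>2"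
    using S_sq by (simp add: T_def a_def b_def power2_eq_square algebra_simps)
  also have "\<dots> = 1 - 2 * b * (z / T) / z - (z / T)\<^sup>2"
    using \<open>T > 0\<close> assms(2) by (simp add: field_simps power2_eq_square)
  also have "\<dots> = 1 - (2 * nu + 3) * GammaB nu z / z - (GammaB nu z)\<^sup>2"
    by (simp add: G T_def S_def b_def)
  finally show "(T - z * (z / S)) / T\<^sup>2
      < 1 - (2 * nu + 3) * GammaB nu z / z - (GammaB nu z)\<^sup>2" .
qed

text \<open>A minimiser of f on [e, z] cannot lie in (e, z], since f increases into any point
  of (e, z] where it is at most f z.\<close>

lemma less_at_left_if_deriv_pos_below:
  fixes f :: "real \<Rightarrow> real"
  assumes "e < z" and cont: "continuous_on {e..z} f"
    and deriv: "\<And>t. t \<in> {e<..z} \<Longrightarrow> f t \<le> f z \<Longrightarrow> \<exists>d>0. (f has_real_derivative d) (at t)"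
  shows "f e < f z"
proof -
  have escape: "\<exists>t\<in>{e..z}. f t < f p" if p: "p \<in> {e<..z}" "f p \<le> f z" for p
  proof -
    obtain d where "d > 0" "(f has_real_derivative d) (at p)"
      using deriv[OF p] by blast
    then obtain r where "r > 0" and r: "\<And>h. h > 0 \<Longrightarrow> h < r \<Longrightarrow> f (p - h) < f p"
      using DERIV_pos_inc_left by blast
    define h where "h = min (r / 2) (p - e)"
    have "h > 0" "h < r" "h \<le> p - e"
      using \<open>r > 0\<close> p(1) by (auto simp: h_def)
    then show ?thesis
      using r p(1) by (intro bexI[of _ "p - h"]) auto
  qed
  obtain p where p: "p \<in> {e..z}" and p_min: "\<And>w. w \<in> {e..z} \<Longrightarrow> f p \<le> f w"
    using continuous_attains_inf[OF compact_Icc _ cont] \<open>e < z\<close> by auto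
  have "p = e"
  proof (rule ccontr)
    assume "p \<noteq> e"
    with p have "p \<in> {e<..z}" "f p \<le> f z"
      using p_min[of z] \<open>e < z\<close> by auto
    with escape p_min show False
      by (meson not_le)
  qed
  obtain t where "t \<in> {e..z}" "f t < f z"
    using escape[of z] \<open>e < z\<close> by auto
  with p_min[of t] \<open>p = e\<close> show ?thesis
    by simp
qed

lemma GammaB_le_bessel_ratio:
  assumes "nu \<ge> 0" "z > 0"
  shows "GammaB nu z \<le> bessel_ratio (nu + 1) z"
proof (rule ccontr)
  define D where "D w = bessel_ratio (nu + 1) w - GammaB nu w" for w
  assume "\<not> ?thesis"
  then have "D z < 0"
    by (simp add: D_def)
  have D_deriv: "\<exists>d>0. (D has_real_derivative d) (at t)" if t: "t > 0" "D t \<le> 0" for t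
  proof -
    define R where "R = bessel_ratio (nu + 1) t"
    obtain G' where G': "(GammaB nu has_real_derivative G') (at t)"
      and G'_less: "G' < 1 - (2 * nu + 3) * GammaB nu t / t - (GammaB nu t)\<^sup>2"
      using GammaB_riccati_subsolution[OF assms(1) t(1)] .
    have R: "(bessel_ratio (nu + 1) has_real_derivative 1 - (2 * nu + 3) * R / t - R\<^sup>2) (at t)"
      using bessel_ratio_riccati[of "nu + 1" t] assms(1) t(1) by (simp add: R_def algebra_simps)
    have "0 < R" "R \<le> GammaB nu t"
      using bessel_ratio_pos[of t "nu + 1"] assms(1) t by (simp_all add: R_def D_def)
    then have "(2 * nu + 3) * R / t \<le> (2 * nu + 3) * GammaB nu t / t" "R\<^sup>2 \<le> (GammaB nu t)\<^sup>2"
      using assms(1) t(1) by (simp_all add: divide_right_mono power_mono)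
    then have "1 - (2 * nu + 3) * R / t - R\<^sup>2 - G' > 0"
      using G'_less by linarith
    moreover have "(D has_real_derivative 1 - (2 * nu + 3) * R / t - R\<^sup>2 - G') (at t)"
      unfolding D_def[abs_def] using R G' by (rule DERIV_diff)
    ultimately show ?thesis
      by blast
  qed
  have D_cont: "continuous_on {e..z} D" if e: "e > 0" for e
  proof -
    have "continuous_on {e..z} (bessel_ratio (nu + 1))"
      by (rule continuous_on_subset[OF continuous_on_bessel_ratio]) (use assms(1) e in auto)
    then show ?thesis
      unfolding D_def[abs_def] by (intro continuous_on_diff continuous_on_GammaB[OF assms(1)])
  qed
  define e where "e = min (z / 2) (- D z)"
  have "0 < e" "e < z"
    using \<open>D z < 0\<close> assms(2) by (auto simp: e_def)
  have "D e < D z"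
  proof (rule less_at_left_if_deriv_pos_below[OF \<open>e < z\<close> D_cont[OF \<open>0 < e\<close>]])
    fix t
    assume "t \<in> {e<..z}" "D t \<le> D z"
    then show "\<exists>d>0. (D has_real_derivative d) (at t)"
      using \<open>D z < 0\<close> \<open>0 < e\<close> by (intro D_deriv) auto
  qed
  moreover have "D e > - e"
    using bessel_ratio_pos[of e "nu + 1"] GammaB_le_self[OF assms(1) \<open>0 < e\<close>] assms(1) \<open>0 < e\<close>
    by (simp add: D_def)
  ultimately show False
    by (simp add: e_def)
qed

definition root_lhs :: "real \<Rightarrow> real \<Rightarrow> real" where
  "root_lhs nu x = (GammaB nu x) powr (2 * nu + 1) * (2 * (nu + 1) / x + GammaB nu x) powr (2 * nu + 3)"

lemma continuous_on_root_lhs: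
  assumes "nu \<ge> 0"
  shows "continuous_on {0<..} (root_lhs nu)"
proof -
  have pos: "GammaB nu x > 0" "2 * (nu + 1) / x > 0" if "x > 0" for x
    using GammaB_pos[OF assms that] assms that by simp_all
  have "GammaB nu x \<noteq> 0" "2 * (nu + 1) / x + GammaB nu x \<noteq> 0" if "x > 0" for x
    using pos[OF that] by linarith+
  then show ?thesis
    unfolding root_lhs_def[abs_def]
    by (intro continuous_intros continuous_on_GammaB[OF assms]) auto
qed

lemma root_lhs_lower_bound:
  assumes "nu \<ge> 0" "0 < x" "x \<le> 1"
  shows "((2 * nu + 2) / (2 * nu + 5)) powr (2 * nu + 1) * (2 * (nu + 1) / x)\<^sup>2 \<le> root_lhs nu x"
proof -
  define c where "c = 2 * (nu + 1) / x"
  have "c > 0"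
    using assms by (simp add: c_def)
  have "((2 * nu + 2) / (2 * nu + 5)) powr (2 * nu + 1) * c\<^sup>2
      = (x / (2 * nu + 5) * c) powr (2 * nu + 1) * c powr 2"
    using assms \<open>c > 0\<close> by (simp add: c_def)
  also have "\<dots> = (x / (2 * nu + 5)) powr (2 * nu + 1) * c powr (2 * nu + 3)"
  proof -
    have "2 * nu + 3 = 2 * nu + 1 + 2"
      by simp
    then have "c powr (2 * nu + 3) = c powr (2 * nu + 1) * c powr 2"
      by (simp only: powr_add)
    then show ?thesis
      by (simp only: powr_mult mult_ac)
  qed
  also have "\<dots> \<le> root_lhs nu x"
    unfolding root_lhs_def c_def[symmetric]
    using GammaB_lower_bound[OF assms] GammaB_pos[OF assms(1,2)] \<open>c > 0\<close> assms
    by (intro mult_mono powr_mono2) auto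
  finally show ?thesis
    by (simp add: c_def)
qed

lemma root_lhs_gt_1_below_root:
  assumes "nu \<ge> 0" "x0 > 0" "root_lhs nu x0 = 1"
    and unique: "\<And>y. y > 0 \<Longrightarrow> root_lhs nu y = 1 \<Longrightarrow> y = x0"
    and "0 < x" "x < x0"
  shows "root_lhs nu x > 1"
proof (rule ccontr)
  assume "\<not> root_lhs nu x > 1"
  define K where "K = ((2 * nu + 2) / (2 * nu + 5)) powr (2 * nu + 1)"
  have "K > 0"
    using assms(1) by (simp add: K_def)
  define p where "p = min 1 (min (x0 / 2) (sqrt K))"
  have p: "0 < p" "p \<le> 1" "p < x0"
    using assms(2) \<open>K > 0\<close> by (auto simp: p_def)
  have "p\<^sup>2 \<le> (sqrt K)\<^sup>2"
    using p(1) by (intro power_mono) (auto simp: p_def)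
  then have "p\<^sup>2 \<le> K"
    using \<open>K > 0\<close> by simp
  have "1 < (2 * (nu + 1))\<^sup>2"
    using power_mono[of 2 "2 * (nu + 1)" 2] assms(1) by simp
  also have "\<dots> \<le> K * (2 * (nu + 1) / p)\<^sup>2"
    using p(1) \<open>p\<^sup>2 \<le> K\<close> by (simp add: power_divide field_simps mult_right_mono)
  also have "\<dots> \<le> root_lhs nu p"
    using root_lhs_lower_bound[OF assms(1) p(1,2)] by (simp add: K_def)
  finally have "root_lhs nu p > 1" .
  have cont: "continuous_on {a..b} (root_lhs nu)" if "a > 0" for a b
    using continuous_on_root_lhs[OF assms(1)] by (rule continuous_on_subset) (use that in auto)
  obtain w where w: "min p x \<le> w" "w \<le> max p x" "root_lhs nu w = 1"
  proof (cases "x \<le> p")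
    case True
    then show ?thesis
      using IVT'[of "root_lhs nu" x 1 p, OF _ _ True cont[OF assms(5)]] that
        \<open>root_lhs nu p > 1\<close> \<open>\<not> root_lhs nu x > 1\<close> by auto
  next
    case False
    then show ?thesis
      using IVT2'[of "root_lhs nu" x 1 p, OF _ _ _ cont[OF p(1)]] that
        \<open>root_lhs nu p > 1\<close> \<open>\<not> root_lhs nu x > 1\<close> by auto
  qed
  then have "w > 0" "w < x0"
    using p assms(5,6) by auto
  with unique w(3) show False
    by blast
qed

lemma besselI_power_product:
  assumes "x > 0" "nu \<ge> 0"
  defines "r \<equiv> bessel_ratio (nu + 1) x"
  shows "besselI (nu + 2) x powr (2 * nu + 1) * besselI nu x powr (2 * nu + 3)
    = r powr (2 * nu + 1) * (2 * (nu + 1) / x + r) powr (2 * nu + 3) * besselI (nu + 1) x powr (4 * nu + 4)"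
proof -
  define Q where "Q = besselI (nu + 1) x"
  have "Q > 0"
    using besselI_pos assms(1,2) by (simp add: Q_def)
  have "besselI (nu + 2) x = r * Q"
    using bessel_ratio_eq[OF assms(1), of "nu + 1"] assms(2) \<open>Q > 0\<close>
    by (simp add: r_def Q_def add.assoc)
  moreover have "besselI nu x = (2 * (nu + 1) / x + r) * Q"
    using besselI_recurrence[OF assms(1,2)] \<open>besselI (nu + 2) x = r * Q\<close>
    by (simp add: Q_def algebra_simps)
  ultimately show ?thesis
    by (simp add: Q_def powr_mult powr_add[symmetric] mult_ac)
qed

theorem mainTheorem8:
  fixes nu x0 :: real
  assumes "nu \<ge> 0"
    and "x0 > 0" and "root_eq nu x0"
    and "\<forall>y>0. root_eq nu y \<longrightarrow> y = x0"
  shows "\<forall>x\<in>{0<..<x0}.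
     (besselI (nu + 1) x) powr (4 * nu + 4)
       < (besselI (nu + 2) x) powr (2 * nu + 1) * (besselI nu x) powr (2 * nu + 3)"
proof
  fix x
  assume "x \<in> {0<..<x0}"
  then have x: "0 < x" "x < x0"
    by auto
  have root_eq_iff: "root_eq nu y \<longleftrightarrow> root_lhs nu y = 1" for y
    by (simp add: root_eq_def root_lhs_def)
  define r where "r = bessel_ratio (nu + 1) x"
  have "1 < root_lhs nu x"
    using root_lhs_gt_1_below_root[OF assms(1,2) _ _ x] assms(3,4) unfolding root_eq_iff by blast
  also have "\<dots> \<le> r powr (2 * nu + 1) * (2 * (nu + 1) / x + r) powr (2 * nu + 3)"
    unfolding root_lhs_def r_def using GammaB_le_bessel_ratio[OF assms(1) x(1)]
      GammaB_pos[OF assms(1) x(1)] assms(1) x(1)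
    by (intro mult_mono powr_mono2) auto
  finally show "(besselI (nu + 1) x) powr (4 * nu + 4)
       < (besselI (nu + 2) x) powr (2 * nu + 1) * (besselI nu x) powr (2 * nu + 3)"
    using besselI_power_product[OF x(1) assms(1)] besselI_pos[OF x(1), of "nu + 1"] assms(1)
    by (simp add: r_def)
qed

end
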